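(* For every $k\in\mathbb N_{>0}$, there exists a $2$-cell $\mathrm{tel}_k$ of the free weak $\omega$-category generated by the computad $\mathrm{Tel}_k$ whose source is the unbiased composite $f_1\ast_0 f_2\ast_0\cdots\ast_0 f_k\ast_0 g_k\ast_0\cdots\ast_0 g_1$ of the $2k$ consecutive $1$-cells $f_1,\dots,f_k,g_k,\dots,g_1$ (formally, the image of the unbiased composition cell over the chain of $2k$ consecutive $1$-cells under the morphism sending the $i$-th $1$-position to $f_i$ for $i\le k$ and to $g_{2k-i+1}$ for $k<i\le 2k$), and whose target is the identity $\mathrm{id}(x_0)$.
   Context: Computads (Dean et al.) are generating data for weak $\omega$-categories: a set of generators in each dimension, each $n$-generator attached to a pair of parallel $(n-1)$-cells of the free weak $\omega$-category on the lower-dimensional generators. $\mathrm{Tel}_k$ is the $2$-computad with $0$-generators $x_0,\dots,x_k$, $1$-generators $f_i\colon x_{i-1}\to x_i$ and $g_i\colon x_i\to x_{i-1}$ for $1\le i\le k$, $2$-generators $\alpha_i\colon f_i\ast_0 g_i\to\mathrm{id}(x_{i-1})$ for $1\le i\le k$, and no higher generators; here $\ast_0$ is the canonical binary composition of $1$-cells and $\mathrm{id}$ the canonical identity. The unbiased composite of a chain of consecutive $1$-cells is the canonical composition operation over the Batanin tree of the chain (a pasting diagram $\bullet\to\bullet\to\cdots\to\bullet$). *)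

theory Defs
  imports Main
begin

datatype tree = Br "tree list"

inductive is_pos :: "tree \<Rightarrow> nat list \<Rightarrow> bool" where
  pos0: "j \<le> length Bs \<Longrightarrow> is_pos (Br Bs) [j]"
| posS: "1 \<le> i \<Longrightarrow> i \<le> length Bs \<Longrightarrow> is_pos (Bs ! (i - 1)) p \<Longrightarrow> is_pos (Br Bs) (i # p)"

text \<open>Boundary trees: positions of the n-dimensional source (e = False) / target (e = True)
boundary of a tree, viewed inside the tree.\<close>

inductive in_bdry :: "tree \<Rightarrow> nat \<Rightarrow> bool \<Rightarrow> nat list \<Rightarrow> bool" where
  bd0s: "in_bdry (Br Bs) 0 False [0]"
| bd0t: "in_bdry (Br Bs) 0 True [length Bs]"
| bdS0: "j \<le> length Bs \<Longrightarrow> in_bdry (Br Bs) (Suc n) e [j]"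
| bdSS: "1 \<le> i \<Longrightarrow> i \<le> length Bs \<Longrightarrow> in_bdry (Bs ! (i - 1)) n e p
          \<Longrightarrow> in_bdry (Br Bs) (Suc n) e (i # p)"

fun tree_dim :: "tree \<Rightarrow> nat" where
  "tree_dim (Br Bs) = (if Bs = [] then 0 else Suc (fold max (map tree_dim Bs) 0))"

text \<open>A coherence Coh B A \<sigma> is the
coherence cell over tree B with (full) type A, written in the variables = positions of B,
composed with the substitution (computad morphism) \<sigma> from positions of B.\<close>

datatype tm = V "nat list" | Coh tree ty "nat list \<Rightarrow> tm"
     and ty = Star | Arr ty tm tm

primrec subst_tm :: "(nat list \<Rightarrow> tm) \<Rightarrow> tm \<Rightarrow> tm"
  and subst_ty :: "(nat list \<Rightarrow> tm) \<Rightarrow> ty \<Rightarrow> ty" where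
  "subst_tm \<sigma> (V x) = \<sigma> x"
| "subst_tm \<sigma> (Coh B A \<tau>) = Coh B A (\<lambda>p. subst_tm \<sigma> (\<tau> p))"
| "subst_ty \<sigma> Star = Star"
| "subst_ty \<sigma> (Arr A s t) = Arr (subst_ty \<sigma> A) (subst_tm \<sigma> s) (subst_tm \<sigma> t)"

primrec fv_tm :: "tm \<Rightarrow> nat list set"
  and fv_ty :: "ty \<Rightarrow> nat list set" where
  "fv_tm (V x) = {x}"
| "fv_tm (Coh B A \<tau>) = (\<Union>p\<in>{p. is_pos B p}. fv_tm (\<tau> p))"
| "fv_ty Star = {}"
| "fv_ty (Arr A s t) = fv_ty A \<union> fv_tm s \<union> fv_tm t"

primrec tdim :: "ty \<Rightarrow> nat" where
  "tdim Star = 0"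
| "tdim (Arr A s t) = Suc (tdim A)"

text \<open>Type of a position: suspension of the type of the position in the child tree.\<close>

primrec susp_ty :: "nat \<Rightarrow> ty \<Rightarrow> ty" where
  "susp_ty i Star = Arr Star (V [i - 1]) (V [i])"
| "susp_ty i (Arr A s t) = Arr (susp_ty i A) (subst_tm (\<lambda>x. V (i # x)) s) (subst_tm (\<lambda>x. V (i # x)) t)"

fun ptype :: "nat list \<Rightarrow> ty" where
  "ptype [] = Star"
| "ptype [j] = Star"
| "ptype (i # j # r) = susp_ty i (ptype (j # r))"

definition bctx :: "tree \<Rightarrow> nat \<Rightarrow> bool \<Rightarrow> nat list \<Rightarrow> ty option" where
  "bctx B n e = (\<lambda>q. if in_bdry B n e q then Some (ptype q) else None)"

definition bset :: "tree \<Rightarrow> nat \<Rightarrow> bool \<Rightarrow> nat list set" where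
  "bset B n e = {q. in_bdry B n e q}"

text \<open>Typing relative to a computad given as a partial map from generator names to their
types (boundary spheres). The coherence rule requires the sphere (s,t) of dimension n to be
full: dim B \<le> n+1, s a term of the source boundary with support (together with its type) all of
the source boundary, and likewise t for the target boundary.\<close>

inductive ty_ok :: "(nat list \<Rightarrow> ty option) \<Rightarrow> ty \<Rightarrow> bool"
  and tm_of :: "(nat list \<Rightarrow> ty option) \<Rightarrow> tm \<Rightarrow> ty \<Rightarrow> bool" where
  ty_star: "ty_ok \<Gamma> Star"
| ty_arr: "ty_ok \<Gamma> A \<Longrightarrow> tm_of \<Gamma> s A \<Longrightarrow> tm_of \<Gamma> t A \<Longrightarrow> ty_ok \<Gamma> (Arr A s t)"
| tm_var: "\<Gamma> x = Some A \<Longrightarrow> ty_ok \<Gamma> A \<Longrightarrow> tm_of \<Gamma> (V x) A"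
| tm_coh: "tree_dim B \<le> Suc (tdim A) \<Longrightarrow>
    tm_of (bctx B (tdim A) False) s A \<Longrightarrow> fv_tm s \<union> fv_ty A = bset B (tdim A) False \<Longrightarrow>
    tm_of (bctx B (tdim A) True) t A \<Longrightarrow> fv_tm t \<union> fv_ty A = bset B (tdim A) True \<Longrightarrow>
    (\<forall>p. is_pos B p \<longrightarrow> tm_of \<Gamma> (\<sigma> p) (subst_ty \<sigma> (ptype p))) \<Longrightarrow>
    tm_of \<Gamma> (Coh B (Arr A s t) \<sigma>) (subst_ty \<sigma> (Arr A s t))"

text \<open>Unbiased composite of a chain of n consecutive 1-cells ar 1, ..., ar n with
vertices ob 0, ..., ob n: the canonical coherence over the tree of the chain.\<close>

definition chain :: "nat \<Rightarrow> tree" where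
  "chain n = Br (replicate n (Br []))"

definition ucomp :: "nat \<Rightarrow> (nat \<Rightarrow> tm) \<Rightarrow> (nat \<Rightarrow> tm) \<Rightarrow> tm" where
  "ucomp n ob ar = Coh (chain n) (Arr Star (V [0]) (V [n]))
     (\<lambda>q. case q of [j] \<Rightarrow> ob j | [i, 0] \<Rightarrow> ar i | _ \<Rightarrow> V [])"

definition comp0 :: "tm \<Rightarrow> tm \<Rightarrow> tm \<Rightarrow> tm \<Rightarrow> tm \<Rightarrow> tm" where
  "comp0 x y z a b = ucomp 2 (\<lambda>j. if j = 0 then x else if j = 1 then y else z)
                              (\<lambda>i. if i = 1 then a else b)"

definition idc :: "tm \<Rightarrow> tm" where
  "idc x = Coh (Br []) (Arr Star (V [0]) (V [0])) (\<lambda>_. x)"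

definition xg :: "nat \<Rightarrow> nat list" where "xg i = [0, i]"
definition fg :: "nat \<Rightarrow> nat list" where "fg i = [1, i]"
definition gg :: "nat \<Rightarrow> nat list" where "gg i = [2, i]"
definition ag :: "nat \<Rightarrow> nat list" where "ag i = [3, i]"

definition tel_ctx :: "nat \<Rightarrow> nat list \<Rightarrow> ty option" where
  "tel_ctx k q = (if length q = 2 then
     (let c = q ! 0; i = q ! 1 in
      if c = 0 \<and> i \<le> k then Some Star
      else if c = 1 \<and> 1 \<le> i \<and> i \<le> k then Some (Arr Star (V (xg (i - 1))) (V (xg i)))
      else if c = 2 \<and> 1 \<le> i \<and> i \<le> k then Some (Arr Star (V (xg i)) (V (xg (i - 1))))
      else if c = 3 \<and> 1 \<le> i \<and> i \<le> k then
        Some (Arr (Arr Star (V (xg (i - 1))) (V (xg (i - 1))))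
                  (comp0 (V (xg (i - 1))) (V (xg i)) (V (xg (i - 1))) (V (fg i)) (V (gg i)))
                  (idc (V (xg (i - 1)))))
      else None)
   else None)"

end

theory Submission
  imports Defs
begin

(* Rebracketing: the unbiased composite of f_1, ..., f_k, g_k, ..., g_1 and the nested composite
   f_1 (f_2 (... (f_k g_k) ...) g_2) g_1 are both full on the chain of 2k arrows, so a single
   coherence cell connects them.  The nested composite is then contracted from the inside out:
   once f_(i+1) (...) g_(i+1) has been contracted to id x_i, whiskering gives
   f_i (f_(i+1) (...) g_(i+1)) g_i => f_i id g_i, a unitor gives f_i id g_i => f_i g_i, and the
   generator alpha_i gives f_i g_i => id x_(i-1); vertical composition chains these 2-cells. *)

lemma is_pos_Br_iff:
  "is_pos (Br Bs) p \<longleftrightarrow> (\<exists>j<Suc (length Bs). p = [j]) \<or>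
     (\<exists>i<length Bs. \<exists>q. p = Suc i # q \<and> is_pos (Bs ! i) q)"
  by (auto elim: is_pos.cases intro: is_pos.intros simp: less_Suc_eq_le)

lemma in_bdry_0_iff: "in_bdry (Br Bs) 0 e q \<longleftrightarrow> q = [if e then length Bs else 0]"
  by (auto elim: in_bdry.cases intro: in_bdry.intros)

lemma in_bdry_Suc_iff:
  "in_bdry (Br Bs) (Suc n) e q \<longleftrightarrow> (\<exists>j<Suc (length Bs). q = [j]) \<or>
     (\<exists>i<length Bs. \<exists>p. q = Suc i # p \<and> in_bdry (Bs ! i) n e p)"
  by (auto elim: in_bdry.cases intro: in_bdry.intros simp: less_Suc_eq_le)

lemma tm_cohI:
  assumes "tree_dim B \<le> Suc (tdim A)"
    and "tm_of (bctx B (tdim A) False) s A" "fv_tm s \<union> fv_ty A = bset B (tdim A) False"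
    and "tm_of (bctx B (tdim A) True) t A" "fv_tm t \<union> fv_ty A = bset B (tdim A) True"
    and "\<And>p. is_pos B p \<Longrightarrow> tm_of \<Gamma> (\<sigma> p) (subst_ty \<sigma> (ptype p))"
    and "T = subst_ty \<sigma> (Arr A s t)"
  shows "tm_of \<Gamma> (Coh B (Arr A s t) \<sigma>) T"
  unfolding assms(7) by (rule tm_coh) (use assms in auto)

lemma tree_dim_chain: "tree_dim (chain n) \<le> 1"
proof -
  have "fold max (replicate n (0::nat)) 0 = 0" by (induction n) auto
  then show ?thesis by (simp add: chain_def map_replicate_const)
qed

lemma is_pos_chain_iff:
  "is_pos (chain n) p \<longleftrightarrow> (\<exists>j\<le>n. p = [j]) \<or> (\<exists>i<n. p = [Suc i, 0])"
  by (auto simp: chain_def is_pos_Br_iff less_Suc_eq_le)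

lemma in_bdry_chain_0: "in_bdry (chain n) 0 e q \<longleftrightarrow> q = [if e then n else 0]"
  by (simp add: chain_def in_bdry_0_iff)

lemma in_bdry_chain_1: "in_bdry (chain n) (Suc 0) e p \<longleftrightarrow> is_pos (chain n) p"
  by (auto simp: chain_def is_pos_Br_iff in_bdry_Suc_iff in_bdry_0_iff)

definition chain_subst :: "(nat \<Rightarrow> tm) \<Rightarrow> (nat \<Rightarrow> tm) \<Rightarrow> nat list \<Rightarrow> tm" where
  "chain_subst ob ar = (\<lambda>q. case q of [j] \<Rightarrow> ob j | [i, 0] \<Rightarrow> ar i | _ \<Rightarrow> V [])"

lemma ucomp_chain_subst:
  "ucomp n ob ar = Coh (chain n) (Arr Star (V [0]) (V [n])) (chain_subst ob ar)"
  by (simp add: ucomp_def chain_subst_def)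

lemma chain_subst_simps [simp]:
  "chain_subst ob ar [j] = ob j" "chain_subst ob ar [i, 0] = ar i" "chain_subst ob ar [] = V []"
  by (simp_all add: chain_subst_def)

lemma tm_of_chain_subst:
  assumes "\<And>j. j \<le> n \<Longrightarrow> tm_of \<Gamma> (ob j) Star"
    and "\<And>i. i < n \<Longrightarrow> tm_of \<Gamma> (ar (Suc i)) (Arr Star (ob i) (ob (Suc i)))"
    and "is_pos (chain n) p"
  shows "tm_of \<Gamma> (chain_subst ob ar p) (subst_ty (chain_subst ob ar) (ptype p))"
  using assms by (auto simp: is_pos_chain_iff)

lemma tm_of_chain_vertex: "j \<le> n \<Longrightarrow> tm_of (bctx (chain n) (Suc 0) e) (V [j]) Star"
  by (rule tm_var) (auto simp: bctx_def in_bdry_chain_1 is_pos_chain_iff intro: ty_star)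

lemma tm_of_chain_edge:
  assumes "i < n"
  shows "tm_of (bctx (chain n) (Suc 0) e) (V [Suc i, 0]) (Arr Star (V [i]) (V [Suc i]))"
proof (rule tm_var)
  show "bctx (chain n) (Suc 0) e [Suc i, 0] = Some (Arr Star (V [i]) (V [Suc i]))"
    using assms by (auto simp: bctx_def in_bdry_chain_1 is_pos_chain_iff)
  show "ty_ok (bctx (chain n) (Suc 0) e) (Arr Star (V [i]) (V [Suc i]))"
    using assms by (intro ty_arr ty_star tm_of_chain_vertex) simp_all
qed

lemma tm_of_ucomp:
  assumes "\<And>j. j \<le> n \<Longrightarrow> tm_of \<Gamma> (ob j) Star"
    and "\<And>i. i < n \<Longrightarrow> tm_of \<Gamma> (ar (Suc i)) (Arr Star (ob i) (ob (Suc i)))"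
  shows "tm_of \<Gamma> (ucomp n ob ar) (Arr Star (ob 0) (ob n))"
  unfolding ucomp_chain_subst
proof (rule tm_cohI)
  show "tree_dim (chain n) \<le> Suc (tdim Star)"
    using tree_dim_chain[of n] by simp
  show "tm_of (bctx (chain n) (tdim Star) False) (V [0]) Star"
    and "tm_of (bctx (chain n) (tdim Star) True) (V [n]) Star"
    by (auto simp: bctx_def in_bdry_chain_0 intro!: tm_var ty_star)
  show "fv_tm (V [0]) \<union> fv_ty Star = bset (chain n) (tdim Star) False"
    and "fv_tm (V [n]) \<union> fv_ty Star = bset (chain n) (tdim Star) True"
    by (auto simp: bset_def in_bdry_chain_0)
  show "tm_of \<Gamma> (chain_subst ob ar p) (subst_ty (chain_subst ob ar) (ptype p))"
    if "is_pos (chain n) p" for p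
    using assms that by (rule tm_of_chain_subst)
qed simp

lemma subst_tm_ucomp:
  assumes "\<sigma> [] = V []"
  shows "subst_tm \<sigma> (ucomp n ob ar) = ucomp n (\<lambda>j. subst_tm \<sigma> (ob j)) (\<lambda>i. subst_tm \<sigma> (ar i))"
  using assms by (auto simp: ucomp_chain_subst chain_subst_def fun_eq_iff split: list.split nat.split)

lemma fv_tm_ucomp: "fv_tm (ucomp n ob ar) = (\<Union>j\<le>n. fv_tm (ob j)) \<union> (\<Union>i<n. fv_tm (ar (Suc i)))"
proof -
  have "{p. is_pos (chain n) p} = (\<lambda>j. [j]) ` {..n} \<union> (\<lambda>i. [Suc i, 0]) ` {..<n}"
    by (auto simp: is_pos_chain_iff)
  then show ?thesis
    by (simp add: ucomp_chain_subst)
qed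

lemma tm_of_idc: "tm_of \<Gamma> x Star \<Longrightarrow> tm_of \<Gamma> (idc x) (Arr Star x x)"
  unfolding idc_def
  by (rule tm_cohI) (auto simp: bctx_def bset_def in_bdry_0_iff is_pos_Br_iff intro!: tm_var ty_star)

lemma subst_tm_idc: "subst_tm \<sigma> (idc x) = idc (subst_tm \<sigma> x)"
  by (simp add: idc_def)

lemma fv_tm_idc: "fv_tm (idc x) = fv_tm x"
  by (simp add: idc_def is_pos_Br_iff)

definition comp3 :: "tm \<Rightarrow> tm \<Rightarrow> tm \<Rightarrow> tm \<Rightarrow> tm \<Rightarrow> tm \<Rightarrow> tm \<Rightarrow> tm" where
  "comp3 w x y z a b c = ucomp 3 (\<lambda>j. if j = 0 then w else if j = 1 then x else if j = 2 then y else z)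
     (\<lambda>i. if i = 1 then a else if i = 2 then b else c)"

lemma tm_of_comp0:
  assumes "tm_of \<Gamma> x Star" "tm_of \<Gamma> y Star" "tm_of \<Gamma> z Star"
    and "tm_of \<Gamma> a (Arr Star x y)" "tm_of \<Gamma> b (Arr Star y z)"
  shows "tm_of \<Gamma> (comp0 x y z a b) (Arr Star x z)"
  using tm_of_ucomp[of 2 \<Gamma> "\<lambda>j. if j = 0 then x else if j = 1 then y else z" "\<lambda>i. if i = 1 then a else b"]
    assms
  by (fastforce simp: comp0_def le_Suc_eq less_Suc_eq numeral_2_eq_2)

lemma tm_of_comp3:
  assumes "tm_of \<Gamma> w Star" "tm_of \<Gamma> x Star" "tm_of \<Gamma> y Star" "tm_of \<Gamma> z Star"
    and "tm_of \<Gamma> a (Arr Star w x)" "tm_of \<Gamma> b (Arr Star x y)" "tm_of \<Gamma> c (Arr Star y z)"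
  shows "tm_of \<Gamma> (comp3 w x y z a b c) (Arr Star w z)"
  using tm_of_ucomp[of 3 \<Gamma> "\<lambda>j. if j = 0 then w else if j = 1 then x else if j = 2 then y else z"
      "\<lambda>i. if i = 1 then a else if i = 2 then b else c"]
    assms
  by (fastforce simp: comp3_def le_Suc_eq less_Suc_eq numeral_3_eq_3 numeral_2_eq_2)

lemma subst_tm_comp0:
  "\<sigma> [] = V [] \<Longrightarrow> subst_tm \<sigma> (comp0 x y z a b) =
     comp0 (subst_tm \<sigma> x) (subst_tm \<sigma> y) (subst_tm \<sigma> z) (subst_tm \<sigma> a) (subst_tm \<sigma> b)"
  unfolding comp0_def by (simp add: subst_tm_ucomp) (intro arg_cong2[where f = "ucomp 2"] ext; simp)

lemma subst_tm_comp3: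
  "\<sigma> [] = V [] \<Longrightarrow> subst_tm \<sigma> (comp3 w x y z a b c) =
     comp3 (subst_tm \<sigma> w) (subst_tm \<sigma> x) (subst_tm \<sigma> y) (subst_tm \<sigma> z)
       (subst_tm \<sigma> a) (subst_tm \<sigma> b) (subst_tm \<sigma> c)"
  unfolding comp3_def by (simp add: subst_tm_ucomp) (intro arg_cong2[where f = "ucomp 3"] ext; simp)

lemma fv_tm_comp0:
  "fv_tm (comp0 x y z a b) = fv_tm x \<union> fv_tm y \<union> fv_tm z \<union> fv_tm a \<union> fv_tm b"
  by (auto simp: comp0_def fv_tm_ucomp atMost_Suc lessThan_Suc numeral_2_eq_2)

lemma fv_tm_comp3:
  "fv_tm (comp3 w x y z a b c) = fv_tm w \<union> fv_tm x \<union> fv_tm y \<union> fv_tm z \<union> fv_tm a \<union> fv_tm b \<union> fv_tm c"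
  by (auto simp: comp3_def fv_tm_ucomp atMost_Suc lessThan_Suc numeral_3_eq_3 numeral_2_eq_2)

definition psubst :: "(nat list \<times> tm) list \<Rightarrow> nat list \<Rightarrow> tm" where
  "psubst ps q = (case map_of ps q of Some t \<Rightarrow> t | None \<Rightarrow> V [])"

definition vcomp :: "tm \<Rightarrow> tm \<Rightarrow> tm \<Rightarrow> tm \<Rightarrow> tm \<Rightarrow> tm \<Rightarrow> tm \<Rightarrow> tm" where
  "vcomp x y a b c \<theta> \<phi> = Coh (Br [Br [Br [], Br []]])
     (Arr (Arr Star (V [0]) (V [1])) (V [1, 0]) (V [1, 2]))
     (psubst [([0], x), ([1], y), ([1, 0], a), ([1, 1], b), ([1, 2], c), ([1, 1, 0], \<theta>), ([1, 2, 0], \<phi>)])"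

lemma tm_of_vcomp:
  assumes "tm_of \<Gamma> x Star" "tm_of \<Gamma> y Star"
    and "tm_of \<Gamma> a (Arr Star x y)" "tm_of \<Gamma> b (Arr Star x y)" "tm_of \<Gamma> c (Arr Star x y)"
    and "tm_of \<Gamma> \<theta> (Arr (Arr Star x y) a b)" "tm_of \<Gamma> \<phi> (Arr (Arr Star x y) b c)"
  shows "tm_of \<Gamma> (vcomp x y a b c \<theta> \<phi>) (Arr (Arr Star x y) a c)"
proof -
  have pos: "is_pos (Br [Br [Br [], Br []]]) p \<longleftrightarrow>
      p \<in> {[0], [1], [1, 0], [1, 1], [1, 2], [1, 1, 0], [1, 2, 0]}" for p
    by (simp add: is_pos_Br_iff Ex_less_Suc2) (auto simp: numeral_2_eq_2)
  have bdry: "in_bdry (Br [Br [Br [], Br []]]) (Suc 0) e p \<longleftrightarrow> p \<in> {[0], [1], [1, if e then 2 else 0]}" for e p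
    by (simp add: in_bdry_Suc_iff in_bdry_0_iff Ex_less_Suc2) (auto simp: numeral_2_eq_2)
  show ?thesis
    unfolding vcomp_def
    by (rule tm_cohI)
      (use assms in \<open>auto simp: pos bdry bctx_def bset_def psubst_def intro!: tm_var ty_arr ty_star\<close>)
qed

definition whisk :: "tm \<Rightarrow> tm \<Rightarrow> tm \<Rightarrow> tm \<Rightarrow> tm \<Rightarrow> tm \<Rightarrow> tm \<Rightarrow> tm \<Rightarrow> tm \<Rightarrow> tm" where
  "whisk w x y z f a b g \<theta> = Coh (Br [Br [], Br [Br []], Br []])
     (Arr (Arr Star (V [0]) (V [3]))
        (comp3 (V [0]) (V [1]) (V [2]) (V [3]) (V [1, 0]) (V [2, 0]) (V [3, 0]))
        (comp3 (V [0]) (V [1]) (V [2]) (V [3]) (V [1, 0]) (V [2, 1]) (V [3, 0])))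
     (psubst [([0], w), ([1], x), ([2], y), ([3], z),
              ([1, 0], f), ([2, 0], a), ([2, 1], b), ([3, 0], g), ([2, 1, 0], \<theta>)])"

lemma tm_of_whisk:
  assumes "tm_of \<Gamma> w Star" "tm_of \<Gamma> x Star" "tm_of \<Gamma> y Star" "tm_of \<Gamma> z Star"
    and "tm_of \<Gamma> f (Arr Star w x)" "tm_of \<Gamma> a (Arr Star x y)" "tm_of \<Gamma> b (Arr Star x y)"
    and "tm_of \<Gamma> g (Arr Star y z)" "tm_of \<Gamma> \<theta> (Arr (Arr Star x y) a b)"
  shows "tm_of \<Gamma> (whisk w x y z f a b g \<theta>) (Arr (Arr Star w z) (comp3 w x y z f a g) (comp3 w x y z f b g))"
proof -
  have pos: "is_pos (Br [Br [], Br [Br []], Br []]) p \<longleftrightarrow>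
      p \<in> {[0], [1], [2], [3], [1, 0], [2, 0], [2, 1], [2, 1, 0], [3, 0]}" for p
    by (simp add: is_pos_Br_iff Ex_less_Suc2) (auto simp: numeral_3_eq_3 numeral_2_eq_2)
  have bdry: "in_bdry (Br [Br [], Br [Br []], Br []]) (Suc 0) e p \<longleftrightarrow>
      p \<in> {[0], [1], [2], [3], [1, 0], [2, if e then 1 else 0], [3, 0]}" for e p
    by (simp add: in_bdry_Suc_iff in_bdry_0_iff Ex_less_Suc2) (auto simp: numeral_3_eq_3 numeral_2_eq_2)
  show ?thesis
    unfolding whisk_def
    by (rule tm_cohI)
      (use assms in \<open>auto simp: pos bdry bctx_def bset_def psubst_def fv_tm_comp3 subst_tm_comp3
         intro!: tm_of_comp3 tm_var ty_arr ty_star\<close>)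
qed

definition unitor :: "tm \<Rightarrow> tm \<Rightarrow> tm \<Rightarrow> tm \<Rightarrow> tm \<Rightarrow> tm" where
  "unitor x y z f g = Coh (chain 2)
     (Arr (Arr Star (V [0]) (V [2]))
        (comp3 (V [0]) (V [1]) (V [1]) (V [2]) (V [1, 0]) (idc (V [1])) (V [2, 0]))
        (comp0 (V [0]) (V [1]) (V [2]) (V [1, 0]) (V [2, 0])))
     (psubst [([0], x), ([1], y), ([2], z), ([1, 0], f), ([2, 0], g)])"

lemma tm_of_unitor:
  assumes "tm_of \<Gamma> x Star" "tm_of \<Gamma> y Star" "tm_of \<Gamma> z Star"
    and "tm_of \<Gamma> f (Arr Star x y)" "tm_of \<Gamma> g (Arr Star y z)"
  shows "tm_of \<Gamma> (unitor x y z f g) (Arr (Arr Star x z) (comp3 x y y z f (idc y) g) (comp0 x y z f g))"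
proof -
  have pos: "is_pos (chain 2) p \<longleftrightarrow> p \<in> {[0], [1], [2], [1, 0], [2, 0]}" for p
    by (auto simp: is_pos_chain_iff le_Suc_eq less_Suc_eq numeral_2_eq_2)
  show ?thesis
    unfolding unitor_def
    by (rule tm_cohI)
      (use assms tree_dim_chain[of 2] in \<open>auto simp: pos in_bdry_chain_1 bctx_def bset_def psubst_def
         fv_tm_comp0 fv_tm_comp3 fv_tm_idc subst_tm_comp0 subst_tm_comp3 subst_tm_idc
         intro!: tm_of_comp0 tm_of_comp3 tm_of_idc tm_var ty_arr ty_star\<close>)
qed

subsection \<open>Nested composites and the associator\<close>

(* nested_comp ob ar i n composes the 2n + 2 arrows ar (i + 1), ..., ar (i + 2n + 2). *)
fun nested_comp :: "(nat \<Rightarrow> tm) \<Rightarrow> (nat \<Rightarrow> tm) \<Rightarrow> nat \<Rightarrow> nat \<Rightarrow> tm" where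
  "nested_comp ob ar i 0 = comp0 (ob i) (ob (Suc i)) (ob (Suc (Suc i))) (ar (Suc i)) (ar (Suc (Suc i)))"
| "nested_comp ob ar i (Suc n) = (let j = Suc i + 2 * n + 2 in
     comp3 (ob i) (ob (Suc i)) (ob j) (ob (Suc j)) (ar (Suc i)) (nested_comp ob ar (Suc i) n) (ar (Suc j)))"

lemma tm_of_nested_comp:
  assumes "\<And>j. i \<le> j \<Longrightarrow> j \<le> i + 2 * n + 2 \<Longrightarrow> tm_of \<Gamma> (ob j) Star"
    and "\<And>j. i \<le> j \<Longrightarrow> j < i + 2 * n + 2 \<Longrightarrow> tm_of \<Gamma> (ar (Suc j)) (Arr Star (ob j) (ob (Suc j)))"
  shows "tm_of \<Gamma> (nested_comp ob ar i n) (Arr Star (ob i) (ob (i + 2 * n + 2)))"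
  using assms
proof (induction n arbitrary: i)
  case 0
  have "i + 2 * 0 + 2 = Suc (Suc i)"
    by simp
  then show ?case
    by (simp only: nested_comp.simps) (intro tm_of_comp0; simp add: 0)
next
  case (Suc n)
  have inner: "tm_of \<Gamma> (nested_comp ob ar (Suc i) n) (Arr Star (ob (Suc i)) (ob (Suc i + 2 * n + 2)))"
    by (rule Suc.IH) (simp_all add: Suc.prems)
  have "i + 2 * Suc n + 2 = Suc (Suc i + 2 * n + 2)"
    by simp
  then show ?case
    by (simp only: nested_comp.simps Let_def) (rule tm_of_comp3[OF _ _ _ _ _ inner]; simp add: Suc.prems)
qed

lemma subst_tm_nested_comp:
  "\<sigma> [] = V [] \<Longrightarrow>
    subst_tm \<sigma> (nested_comp ob ar i n) = nested_comp (\<lambda>j. subst_tm \<sigma> (ob j)) (\<lambda>j. subst_tm \<sigma> (ar j)) i n"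
  by (induction n arbitrary: i) (simp_all add: subst_tm_comp0 subst_tm_comp3)

lemma fv_tm_nested_comp:
  "fv_tm (nested_comp ob ar i n) =
    (\<Union>j\<in>{i..i + 2 * n + 2}. fv_tm (ob j)) \<union> (\<Union>j\<in>{i<..i + 2 * n + 2}. fv_tm (ar j))"
proof (induction n arbitrary: i)
  case 0
  have "{i..i + 2 * 0 + 2} = {i, Suc i, Suc (Suc i)}" "{i<..i + 2 * 0 + 2} = {Suc i, Suc (Suc i)}"
    by auto
  then show ?case
    by (simp add: fv_tm_comp0 Un_ac)
next
  case (Suc n)
  define j where "j = Suc i + 2 * n + 2"
  have "{i..i + 2 * Suc n + 2} = {i, Suc j} \<union> {Suc i..j}"
    and "{i<..i + 2 * Suc n + 2} = {Suc i, Suc j} \<union> {Suc i<..j}"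
    and "Suc i \<in> {Suc i..j}" "j \<in> {Suc i..j}"
    by (auto simp: j_def)
  then show ?case
    unfolding nested_comp.simps Let_def j_def[symmetric] fv_tm_comp3 Suc.IH by auto
qed

lemma unbiased_to_nested:
  assumes "\<And>j. j \<le> 2 * n + 2 \<Longrightarrow> tm_of \<Gamma> (ob j) Star"
    and "\<And>i. i < 2 * n + 2 \<Longrightarrow> tm_of \<Gamma> (ar (Suc i)) (Arr Star (ob i) (ob (Suc i)))"
  shows "\<exists>c. tm_of \<Gamma> c (Arr (Arr Star (ob 0) (ob (2 * n + 2))) (ucomp (2 * n + 2) ob ar) (nested_comp ob ar 0 n))"
proof -
  define N where "N = 2 * n + 2"
  \<comment> \<open>Both composites use every position of chain N, so they bound a full sphere.\<close>
  let ?s = "ucomp N (\<lambda>j. V [j]) (\<lambda>i. V [i, 0])" and ?t = "nested_comp (\<lambda>j. V [j]) (\<lambda>i. V [i, 0]) 0 n"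
  have "tm_of \<Gamma> (Coh (chain N) (Arr (Arr Star (V [0]) (V [N])) ?s ?t) (chain_subst ob ar))
      (Arr (Arr Star (ob 0) (ob N)) (ucomp N ob ar) (nested_comp ob ar 0 n))"
  proof (rule tm_cohI)
    show "tree_dim (chain N) \<le> Suc (tdim (Arr Star (V [0]) (V [N])))"
      using tree_dim_chain[of N] by simp
    show "tm_of (bctx (chain N) (tdim (Arr Star (V [0]) (V [N]))) False) ?s (Arr Star (V [0]) (V [N]))"
      by (simp, rule tm_of_ucomp[where ob = "\<lambda>j. V [j]", simplified])
        (auto intro: tm_of_chain_vertex tm_of_chain_edge)
    show "tm_of (bctx (chain N) (tdim (Arr Star (V [0]) (V [N]))) True) ?t (Arr Star (V [0]) (V [N]))"
      using tm_of_nested_comp[of 0 n "bctx (chain N) (Suc 0) True" "\<lambda>j. V [j]" "\<lambda>i. V [i, 0]"]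
      by (simp add: N_def tm_of_chain_vertex tm_of_chain_edge)
    have "{p. is_pos (chain N) p} = {[j] | j. j \<le> N} \<union> {[Suc i, 0] | i. i < N}"
      by (auto simp: is_pos_chain_iff)
    then show "fv_tm ?s \<union> fv_ty (Arr Star (V [0]) (V [N])) = bset (chain N) (tdim (Arr Star (V [0]) (V [N]))) False"
      and "fv_tm ?t \<union> fv_ty (Arr Star (V [0]) (V [N])) = bset (chain N) (tdim (Arr Star (V [0]) (V [N]))) True"
      by (auto simp: fv_tm_ucomp fv_tm_nested_comp bset_def in_bdry_chain_1 N_def gr0_conv_Suc)
    show "tm_of \<Gamma> (chain_subst ob ar p) (subst_ty (chain_subst ob ar) (ptype p))"
      if "is_pos (chain N) p" for p
      using assms that unfolding N_def by (rule tm_of_chain_subst)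
  qed (simp add: subst_tm_ucomp subst_tm_nested_comp)
  then show ?thesis
    unfolding N_def by blast
qed

subsection \<open>Contracting a telescope\<close>

fun zigzag :: "(nat \<Rightarrow> tm) \<Rightarrow> (nat \<Rightarrow> tm) \<Rightarrow> (nat \<Rightarrow> tm) \<Rightarrow> nat \<Rightarrow> nat \<Rightarrow> tm" where
  "zigzag x f g i 0 = comp0 (x i) (x (Suc i)) (x i) (f (Suc i)) (g (Suc i))"
| "zigzag x f g i (Suc n) =
     comp3 (x i) (x (Suc i)) (x (Suc i)) (x i) (f (Suc i)) (zigzag x f g (Suc i) n) (g (Suc i))"

(* The chain x_0 -> ... -> x_k -> ... -> x_0 of the theorem, with edges f_1, ..., f_k, g_k, ..., g_1. *)
definition tel_vertex :: "(nat \<Rightarrow> tm) \<Rightarrow> nat \<Rightarrow> nat \<Rightarrow> tm" where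
  "tel_vertex x k = (\<lambda>j. if j \<le> k then x j else x (2 * k - j))"

definition tel_edge :: "(nat \<Rightarrow> tm) \<Rightarrow> (nat \<Rightarrow> tm) \<Rightarrow> nat \<Rightarrow> nat \<Rightarrow> tm" where
  "tel_edge f g k = (\<lambda>i. if i \<le> k then f i else g (2 * k - i + 1))"

lemma nested_comp_tel_eq_zigzag:
  "i + n + 1 = k \<Longrightarrow> nested_comp (tel_vertex x k) (tel_edge f g k) i n = zigzag x f g i n"
proof (induction n arbitrary: i)
  case 0
  then show ?case
    by (auto simp: tel_vertex_def tel_edge_def)
next
  case (Suc n)
  then show ?case
    by (auto simp: tel_vertex_def tel_edge_def Let_def)
qed

locale telescope =
  fixes \<Gamma> :: "nat list \<Rightarrow> ty option" and k :: nat and x f g a :: "nat \<Rightarrow> tm"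
  assumes tm_of_x: "j \<le> k \<Longrightarrow> tm_of \<Gamma> (x j) Star"
    and tm_of_f: "i < k \<Longrightarrow> tm_of \<Gamma> (f (Suc i)) (Arr Star (x i) (x (Suc i)))"
    and tm_of_g: "i < k \<Longrightarrow> tm_of \<Gamma> (g (Suc i)) (Arr Star (x (Suc i)) (x i))"
    and tm_of_a: "i < k \<Longrightarrow> tm_of \<Gamma> (a (Suc i))
      (Arr (Arr Star (x i) (x i)) (comp0 (x i) (x (Suc i)) (x i) (f (Suc i)) (g (Suc i))) (idc (x i)))"
begin

lemma tm_of_zigzag: "i + n < k \<Longrightarrow> tm_of \<Gamma> (zigzag x f g i n) (Arr Star (x i) (x i))"
  by (induction n arbitrary: i) (auto intro!: tm_of_comp0 tm_of_comp3 tm_of_x tm_of_f tm_of_g)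

lemma zigzag_contraction:
  "i + n < k \<Longrightarrow> \<exists>t. tm_of \<Gamma> t (Arr (Arr Star (x i) (x i)) (zigzag x f g i n) (idc (x i)))"
proof (induction n arbitrary: i)
  case 0
  then show ?case
    using tm_of_a by auto
next
  case (Suc n)
  let ?f = "f (Suc i)" and ?g = "g (Suc i)" and ?y = "x (Suc i)"
  let ?f_id_g = "comp3 (x i) ?y ?y (x i) ?f (idc ?y) ?g"
  have x: "tm_of \<Gamma> (x i) Star" "tm_of \<Gamma> ?y Star"
    and fg: "tm_of \<Gamma> ?f (Arr Star (x i) ?y)" "tm_of \<Gamma> ?g (Arr Star ?y (x i))"
    using Suc.prems by (auto intro: tm_of_x tm_of_f tm_of_g)
  obtain t where t: "tm_of \<Gamma> t (Arr (Arr Star ?y ?y) (zigzag x f g (Suc i) n) (idc ?y))"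
    using Suc.IH[of "Suc i"] Suc.prems by auto
  have inner: "tm_of \<Gamma> (zigzag x f g (Suc i) n) (Arr Star ?y ?y)"
    using Suc.prems by (auto intro: tm_of_zigzag)
  have whiskered: "tm_of \<Gamma> (whisk (x i) ?y ?y (x i) ?f (zigzag x f g (Suc i) n) (idc ?y) ?g t)
      (Arr (Arr Star (x i) (x i)) (zigzag x f g i (Suc n)) ?f_id_g)"
    using tm_of_whisk[OF x(1) x(2) x(2) x(1) fg(1) inner tm_of_idc[OF x(2)] fg(2) t] by simp
  have unit: "tm_of \<Gamma> (unitor (x i) ?y (x i) ?f ?g)
      (Arr (Arr Star (x i) (x i)) ?f_id_g (comp0 (x i) ?y (x i) ?f ?g))"
    by (rule tm_of_unitor[OF x(1) x(2) x(1) fg])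
  have cancel: "tm_of \<Gamma> (a (Suc i)) (Arr (Arr Star (x i) (x i)) (comp0 (x i) ?y (x i) ?f ?g) (idc (x i)))"
    using Suc.prems by (auto intro: tm_of_a)
  have "tm_of \<Gamma> (zigzag x f g i (Suc n)) (Arr Star (x i) (x i))"
    and "tm_of \<Gamma> ?f_id_g (Arr Star (x i) (x i))"
    and "tm_of \<Gamma> (comp0 (x i) ?y (x i) ?f ?g) (Arr Star (x i) (x i))"
    using Suc.prems x fg by (auto intro!: tm_of_zigzag tm_of_comp3 tm_of_comp0 tm_of_idc)
  then show ?case
    using tm_of_vcomp[OF x(1) x(1)] whiskered unit cancel tm_of_idc[OF x(1)] by blast
qed

lemma tm_of_tel_vertex: "j \<le> 2 * k \<Longrightarrow> tm_of \<Gamma> (tel_vertex x k j) Star"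
  by (auto simp: tel_vertex_def intro: tm_of_x)

lemma tm_of_tel_edge:
  assumes "i < 2 * k"
  shows "tm_of \<Gamma> (tel_edge f g k (Suc i)) (Arr Star (tel_vertex x k i) (tel_vertex x k (Suc i)))"
proof (cases "i < k")
  case True
  then show ?thesis
    by (simp add: tel_edge_def tel_vertex_def tm_of_f)
next
  case False
  define m where "m = 2 * k - Suc i"
  have "m < k" "tel_edge f g k (Suc i) = g (Suc m)"
    "tel_vertex x k i = x (Suc m)" "tel_vertex x k (Suc i) = x m"
    using assms False by (auto simp: m_def tel_edge_def tel_vertex_def Suc_diff_Suc)
  then show ?thesis
    by (simp add: tm_of_g)
qed

lemma unbiased_tel_contraction:
  assumes "0 < k"
  shows "\<exists>t. tm_of \<Gamma> t
    (Arr (Arr Star (x 0) (x 0)) (ucomp (2 * k) (tel_vertex x k) (tel_edge f g k)) (idc (x 0)))"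
proof -
  obtain n where k: "k = n + 1"
    using assms by (metis Suc_eq_plus1 gr0_conv_Suc)
  have ends: "tel_vertex x k 0 = x 0" "tel_vertex x k (2 * k) = x 0"
    by (simp_all add: tel_vertex_def)
  have two_k: "2 * n + 2 = 2 * k"
    by (simp add: k)
  have zz: "nested_comp (tel_vertex x k) (tel_edge f g k) 0 n = zigzag x f g 0 n"
    by (simp add: k nested_comp_tel_eq_zigzag)
  obtain c where c: "tm_of \<Gamma> c (Arr (Arr Star (x 0) (x 0))
      (ucomp (2 * k) (tel_vertex x k) (tel_edge f g k)) (zigzag x f g 0 n))"
    using unbiased_to_nested[of n \<Gamma> "tel_vertex x k" "tel_edge f g k", unfolded two_k,
        OF tm_of_tel_vertex tm_of_tel_edge]
    unfolding ends zz by blast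
  obtain t where t: "tm_of \<Gamma> t (Arr (Arr Star (x 0) (x 0)) (zigzag x f g 0 n) (idc (x 0)))"
    using zigzag_contraction[of 0 n] k by auto
  have x0: "tm_of \<Gamma> (x 0) Star"
    by (simp add: tm_of_x)
  have "tm_of \<Gamma> (ucomp (2 * k) (tel_vertex x k) (tel_edge f g k)) (Arr Star (x 0) (x 0))"
    using tm_of_ucomp[of "2 * k" \<Gamma> "tel_vertex x k" "tel_edge f g k"] tm_of_tel_vertex tm_of_tel_edge
    by (simp add: ends)
  moreover have "tm_of \<Gamma> (zigzag x f g 0 n) (Arr Star (x 0) (x 0))"
    using k by (simp add: tm_of_zigzag)
  ultimately show ?thesis
    using tm_of_vcomp[OF x0 x0 _ _ tm_of_idc[OF x0] c t] by blast
qed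

end

lemma telescope_tel_ctx:
  "telescope (tel_ctx k) k (\<lambda>i. V (xg i)) (\<lambda>i. V (fg i)) (\<lambda>i. V (gg i)) (\<lambda>i. V (ag i))"
proof -
  have x: "j \<le> k \<Longrightarrow> tm_of (tel_ctx k) (V (xg j)) Star" for j
    by (rule tm_var) (auto simp: tel_ctx_def xg_def intro: ty_star)
  have f: "i < k \<Longrightarrow> tm_of (tel_ctx k) (V (fg (Suc i))) (Arr Star (V (xg i)) (V (xg (Suc i))))"
    and g: "i < k \<Longrightarrow> tm_of (tel_ctx k) (V (gg (Suc i))) (Arr Star (V (xg (Suc i))) (V (xg i)))" for i
    by (auto simp: tel_ctx_def fg_def gg_def intro!: tm_var ty_arr ty_star x)
  show ?thesis
  proof
    fix i assume "i < k"
    then show "tm_of (tel_ctx k) (V (ag (Suc i))) (Arr (Arr Star (V (xg i)) (V (xg i)))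
        (comp0 (V (xg i)) (V (xg (Suc i))) (V (xg i)) (V (fg (Suc i))) (V (gg (Suc i)))) (idc (V (xg i))))"
      by (auto simp: tel_ctx_def ag_def intro!: tm_var ty_arr ty_star x f g tm_of_comp0 tm_of_idc)
  qed (use x f g in auto)
qed

theorem theorem5p2:
  fixes k :: nat
  assumes "0 < k"
  shows "\<exists>tel. tm_of (tel_ctx k) tel
           (Arr (Arr Star (V (xg 0)) (V (xg 0)))
              (ucomp (2 * k)
                 (\<lambda>j. if j \<le> k then V (xg j) else V (xg (2 * k - j)))
                 (\<lambda>i. if i \<le> k then V (fg i) else V (gg (2 * k - i + 1))))
              (idc (V (xg 0))))"
proof -
  interpret telescope "tel_ctx k" k "\<lambda>i. V (xg i)" "\<lambda>i. V (fg i)" "\<lambda>i. V (gg i)" "\<lambda>i. V (ag i)"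
    by (rule telescope_tel_ctx)
  show ?thesis
    using unbiased_tel_contraction[OF assms] by (simp add: tel_vertex_def tel_edge_def)
qed

end
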